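(* Let $\mathcal{X}\subseteq\mathbb{R}^n$ and let $h = p_k \circ \dots \circ p_1:\mathbb{R}^n \to \mathcal{Y}$ be a model, where each layer $p_r:\mathbb{R}^{n^{r-1}}\to\mathbb{R}^{n^r}$ ($n^0=n$). Let $g:\mathbb{R}^n\times\mathcal{Y} \to G$ be an explanation function (EF). For $m\in\{1,\dots,k\}$ write $f_m := p_m \circ \dots \circ p_1$. Suppose that for some $i \in \{1,\dots,k\}$, $f_i$ is a $\gamma(\epsilon)$-explainable representation with respect to $g$, for a function $\gamma:(0,\infty)\to(0,\infty)$. Let $j$ with $1\le j\le i$, and assume that $p_r$ is an $l_r$-Lipschitz function for every $r \in \{j+1,\dots,i\}$. Then $f_j$ is $\hat{\gamma}(\epsilon)$-explainable with respect to $g$, where $\hat{\gamma}(\epsilon) := \gamma\left(\epsilon \cdot \prod^{i}_{r=j+1} l_r \right)$.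
   Context: $G$ is a set of explanations equipped with a norm (or distance) written $|\cdot|$; the spaces $\mathbb{R}^{d}$ are also equipped with a norm $|\cdot|$, and Lipschitz continuity is with respect to these norms. For a model $h=c\circ f$ with representation $f:\mathcal{X}\to\mathbb{R}^d$ and an EF $g$, $f$ is called a $\gamma(\epsilon)$-explainable representation with respect to $g$ if for every $\epsilon\in(0,\infty)$ and all $x_1,x_2\in\mathcal{X}$: $|f(x_1)-f(x_2)|\le\epsilon$ implies $|g(x_1,h(x_1))-g(x_2,h(x_2))|\le\gamma(\epsilon)$. For the layered model, $f_m$ is regarded as the representation with $c=p_k\circ\dots\circ p_{m+1}$. *)

theory Defs
  imports "HOL-Analysis.Analysis"
begin

text \<open>Vectors of R^d are represented as functions nat => real vanishing outside
  the indices 0..d-1 (dimensions vary along the layers, so type-indexed vectors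
  cannot be used).\<close>
definition Vec :: "nat \<Rightarrow> (nat \<Rightarrow> real) set" where
  "Vec d = {x. \<forall>q\<ge>d. x q = 0}"

definition norm_on :: "nat \<Rightarrow> ((nat \<Rightarrow> real) \<Rightarrow> real) \<Rightarrow> bool" where
  "norm_on d N \<longleftrightarrow>
     (\<forall>x\<in>Vec d. 0 \<le> N x \<and> (N x = 0 \<longleftrightarrow> x = (\<lambda>q. 0))) \<and>
     (\<forall>x\<in>Vec d. \<forall>c. N (\<lambda>q. c * x q) = \<bar>c\<bar> * N x) \<and>
     (\<forall>x\<in>Vec d. \<forall>y\<in>Vec d. N (\<lambda>q. x q + y q) \<le> N x + N y)"

primrec layer_comp :: "(nat \<Rightarrow> (nat \<Rightarrow> real) \<Rightarrow> (nat \<Rightarrow> real)) \<Rightarrow> nat \<Rightarrow> (nat \<Rightarrow> real) \<Rightarrow> (nat \<Rightarrow> real)" where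
  "layer_comp p 0 = id"
| "layer_comp p (Suc m) = p (Suc m) \<circ> layer_comp p m"

definition lipschitz_wrt ::
  "(nat \<Rightarrow> real) set \<Rightarrow> ((nat \<Rightarrow> real) \<Rightarrow> real) \<Rightarrow> ((nat \<Rightarrow> real) \<Rightarrow> real) \<Rightarrow> real
    \<Rightarrow> ((nat \<Rightarrow> real) \<Rightarrow> (nat \<Rightarrow> real)) \<Rightarrow> bool" where
  "lipschitz_wrt D N1 N2 l q \<longleftrightarrow> (\<forall>x\<in>D. \<forall>y\<in>D. N2 (\<lambda>t. q x t - q y t) \<le> l * N1 (\<lambda>t. x t - y t))"

definition explainable_rep ::
  "(nat \<Rightarrow> real) set \<Rightarrow> ((nat \<Rightarrow> real) \<Rightarrow> real) \<Rightarrow> ((nat \<Rightarrow> real) \<Rightarrow> (nat \<Rightarrow> real))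
    \<Rightarrow> ((nat \<Rightarrow> real) \<Rightarrow> (nat \<Rightarrow> real) \<Rightarrow> 'g::metric_space)
    \<Rightarrow> ((nat \<Rightarrow> real) \<Rightarrow> (nat \<Rightarrow> real)) \<Rightarrow> (real \<Rightarrow> real) \<Rightarrow> bool" where
  "explainable_rep X N f g h \<gamma> \<longleftrightarrow>
     (\<forall>\<epsilon>>0. \<forall>x1\<in>X. \<forall>x2\<in>X. N (\<lambda>t. f x1 t - f x2 t) \<le> \<epsilon> \<longrightarrow>
        dist (g x1 (h x1)) (g x2 (h x2)) \<le> \<gamma> \<epsilon>)"

end

theory Submission
  imports Defs
begin

text \<open>Between layers j and i the representation is Lipschitz with constant
  \<Prod>r\<in>{j+1..i}. l r, the product of the layer constants. Hence inputs whose
  j-th representations are \<epsilon>-close have i-th representations that are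
  (\<epsilon> \<cdot> \<Prod> l r)-close, and explainability of f_i bounds the distance of their
  explanations by \<gamma>(\<epsilon> \<cdot> \<Prod> l r).\<close>

lemma layer_comp_in_Vec:
  assumes layers: "\<forall>r\<in>{j+1..m}. \<forall>x\<in>Vec (nd (r - 1)). p r x \<in> Vec (nd r)"
    and "j \<le> m" and "layer_comp p j x \<in> Vec (nd j)"
  shows "layer_comp p m x \<in> Vec (nd m)"
  using \<open>j \<le> m\<close> layers
proof (induction m rule: dec_induct)
  case base
  show ?case using assms(3) .
next
  case (step m)
  then have "layer_comp p m x \<in> Vec (nd m)" by auto
  moreover have "Suc m \<in> {j+1..Suc m}" using step.hyps(1) by simp
  ultimately show ?case using step.prems by fastforce
qed

lemma layer_comp_diff_le_prod:
  assumes layers: "\<forall>r\<in>{j+1..i}. \<forall>x\<in>Vec (nd (r - 1)). p r x \<in> Vec (nd r)"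
    and lip: "\<forall>r\<in>{j+1..i}. 0 \<le> l r \<and>
               lipschitz_wrt (Vec (nd (r - 1))) (N (nd (r - 1))) (N (nd r)) (l r) (p r)"
    and "j \<le> i"
    and x1: "layer_comp p j x1 \<in> Vec (nd j)" and x2: "layer_comp p j x2 \<in> Vec (nd j)"
  shows "N (nd i) (\<lambda>t. layer_comp p i x1 t - layer_comp p i x2 t)
    \<le> (\<Prod>r\<in>{j+1..i}. l r) * N (nd j) (\<lambda>t. layer_comp p j x1 t - layer_comp p j x2 t)"
  using \<open>j \<le> i\<close> layers lip
proof (induction i rule: dec_induct)
  case base
  show ?case by simp
next
  case (step m)
  let ?d = "N (nd j) (\<lambda>t. layer_comp p j x1 t - layer_comp p j x2 t)"
  have lip_m: "0 \<le> l (Suc m)"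
    "lipschitz_wrt (Vec (nd m)) (N (nd m)) (N (nd (Suc m))) (l (Suc m)) (p (Suc m))"
    using bspec[OF step.prems(2), of "Suc m"] step.hyps(1) by auto
  have "layer_comp p m x1 \<in> Vec (nd m)" "layer_comp p m x2 \<in> Vec (nd m)"
    using layer_comp_in_Vec[OF _ step.hyps(1)] step.prems(1) x1 x2 by auto
  then have "N (nd (Suc m)) (\<lambda>t. layer_comp p (Suc m) x1 t - layer_comp p (Suc m) x2 t)
      \<le> l (Suc m) * N (nd m) (\<lambda>t. layer_comp p m x1 t - layer_comp p m x2 t)"
    using lip_m(2) unfolding lipschitz_wrt_def by simp
  also have "\<dots> \<le> l (Suc m) * ((\<Prod>r\<in>{j+1..m}. l r) * ?d)"
    using step.IH step.prems lip_m(1) by (intro mult_left_mono) auto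
  also have "\<dots> = (\<Prod>r\<in>{j+1..Suc m}. l r) * ?d"
    using step.hyps(1) by (simp add: prod.nat_ivl_Suc')
  finally show ?case .
qed

lemma explainable_rep_rescale:
  assumes expl: "explainable_rep X N' f' g h \<gamma>"
    and "c > 0"
    and le: "\<forall>x1\<in>X. \<forall>x2\<in>X. N' (\<lambda>t. f' x1 t - f' x2 t) \<le> c * N (\<lambda>t. f x1 t - f x2 t)"
  shows "explainable_rep X N f g h (\<lambda>\<epsilon>. \<gamma> (\<epsilon> * c))"
  unfolding explainable_rep_def
proof (intro allI impI ballI)
  fix \<epsilon> :: real and x1 x2
  assume "\<epsilon> > 0" "x1 \<in> X" "x2 \<in> X" and close: "N (\<lambda>t. f x1 t - f x2 t) \<le> \<epsilon>"
  have "N' (\<lambda>t. f' x1 t - f' x2 t) \<le> c * N (\<lambda>t. f x1 t - f x2 t)"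
    using le \<open>x1 \<in> X\<close> \<open>x2 \<in> X\<close> by blast
  also have "\<dots> \<le> \<epsilon> * c"
    using mult_left_mono[OF close, of c] \<open>c > 0\<close> by (simp add: mult.commute)
  finally have "N' (\<lambda>t. f' x1 t - f' x2 t) \<le> \<epsilon> * c" .
  moreover have "\<epsilon> * c > 0" using \<open>\<epsilon> > 0\<close> \<open>c > 0\<close> by simp
  ultimately show "dist (g x1 (h x1)) (g x2 (h x2)) \<le> \<gamma> (\<epsilon> * c)"
    using expl \<open>x1 \<in> X\<close> \<open>x2 \<in> X\<close> unfolding explainable_rep_def by blast
qed

theorem theorem2:
  fixes X :: "(nat \<Rightarrow> real) set" and n k i j :: nat and nd :: "nat \<Rightarrow> nat"
    and p :: "nat \<Rightarrow> (nat \<Rightarrow> real) \<Rightarrow> (nat \<Rightarrow> real)"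
    and nrm :: "nat \<Rightarrow> (nat \<Rightarrow> real) \<Rightarrow> real"
    and g :: "(nat \<Rightarrow> real) \<Rightarrow> (nat \<Rightarrow> real) \<Rightarrow> 'g::metric_space"
    and \<gamma> :: "real \<Rightarrow> real" and l :: "nat \<Rightarrow> real"
  assumes norms: "\<forall>d. norm_on d (nrm d)"
    and dim0: "nd 0 = n"
    and X: "X \<subseteq> Vec n"
    and layers: "\<forall>r\<in>{1..k}. \<forall>x\<in>Vec (nd (r - 1)). p r x \<in> Vec (nd r)"
    and i: "1 \<le> i" "i \<le> k"
    and gamma_pos: "\<forall>\<epsilon>>0. \<gamma> \<epsilon> > 0"
    and expl: "explainable_rep X (nrm (nd i)) (layer_comp p i) g (layer_comp p k) \<gamma>"
    and j: "1 \<le> j" "j \<le> i"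
    and lip: "\<forall>r\<in>{j+1..i}. l r > 0 \<and>
               lipschitz_wrt (Vec (nd (r - 1))) (nrm (nd (r - 1))) (nrm (nd r)) (l r) (p r)"
  shows "explainable_rep X (nrm (nd j)) (layer_comp p j) g (layer_comp p k)
           (\<lambda>\<epsilon>. \<gamma> (\<epsilon> * (\<Prod>r\<in>{j+1..i}. l r)))"
proof (rule explainable_rep_rescale[OF expl])
  show "(\<Prod>r\<in>{j+1..i}. l r) > 0"
    using lip by (intro prod_pos) auto
  have in_Vec: "layer_comp p j x \<in> Vec (nd j)" if "x \<in> X" for x
    using layer_comp_in_Vec[of 0 j nd p x] layers X dim0 that i j by auto
  show "\<forall>x1\<in>X. \<forall>x2\<in>X.
      nrm (nd i) (\<lambda>t. layer_comp p i x1 t - layer_comp p i x2 t)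
      \<le> (\<Prod>r\<in>{j+1..i}. l r) * nrm (nd j) (\<lambda>t. layer_comp p j x1 t - layer_comp p j x2 t)"
    using layer_comp_diff_le_prod[of j i nd p l nrm] layers lip i j in_Vec
    by (simp add: less_imp_le)
qed

end
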